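(* Let $n\ge2$ and let $v_A=(a_1,\dots,a_n)$ be the vector associated to a positive integral diamond $A$ of Dynkin type $\mathbb{A}_n$ with $a_n=1$, such that $(T_1(v_A),\dots,T_n(v_A))$ defines a Dyck path in $\mathfrak{D}_{2(n+1)}$. Then for each $1\le i<n$, the vector $(T_1(v_{A+i}),\dots,T_n(v_{A+i}))$ also defines a Dyck path in $\mathfrak{D}_{2(n+1)}$, where $v_{A+i}=(a_1,\dots,a_i,\,a_i+a_{i+1},\,a_{i+1},\dots,a_{n-1})$.
   Context: An $\mathbb{A}_n$-diamond over an integral domain $\mathbf{R}$ is a family $A=(a_{i,j})$ of elements of $\mathbf{R}$, with $a_{1,j}$ for $1\le j\le n+1$ and $a_{2,j}$ for $0\le j\le n$, such that (D1) $a_{2,0}=a_{1,n+1}=1$ and (D2) $a_{1,j}a_{2,j}-a_{2,j-1}a_{1,j+1}=1$ for $1\le j\le n$. For $\mathbf{R}=\mathbb{Z}$, $A$ is a positive integral diamond of Dynkin type $\mathbb{A}_n$ if it also satisfies (D3): there are integers $a,m_a$ with $1\le a\le\lfloor (n+2)/2\rfloor$ such that either $(a_{1,1},a_{2,1})=(a,a+m_a)$ or $(a_{1,1},a_{2,1})=(a+m_a,a)$, and $a_{1,2}=a^2+am_a-1$, where $1\le m_1\le n$ when $a=1$ and $0\le m_a\le n+2(1-a)$ when $a>1$. The vector associated to $A$ is $v_A=(a_{1,1},\dots,a_{1,n})$. A Dyck path of length $2N$ is a word in $U,D$ with $N$ of each letter such that every prefix has at least as many $U$'s as $D$'s; $\mathfrak{D}_{2N}$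 is their set. For $G\in\mathfrak{D}_{2(n+1)}$ let $m_i$ be the number of $U$'s before the $i$-th $D$ and $v_G=(m_1,m_2-1,\dots,m_n-n+1)$; a vector $w\in\mathbb{Z}^n$ defines a Dyck path in $\mathfrak{D}_{2(n+1)}$ if $w=v_G$ for some $G\in\mathfrak{D}_{2(n+1)}$. For $u=(u_1,\dots,u_m)\in\mathbb{N}^m$ and $1\le i\le m$: put $r_0=u_i$; while some $l\in\{1,\dots,i\}$ has $r_k-u_l>0$, let $l_k$ be the largest such $l$ and $r_{k+1}=r_k-u_{l_k}$; if this stops at $r_t$ after $t\ge0$ steps, $T_i(u)=r_t+t$. *)

theory Defs
  imports Main "HOL-Library.While_Combinator"
begin

text \<open>An A_n-diamond over the integers: a1 j stands for a_{1,j} (1 \<le> j \<le> n+1),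
  a2 j stands for a_{2,j} (0 \<le> j \<le> n); values at other indices are irrelevant.\<close>

definition is_diamond :: "nat \<Rightarrow> (nat \<Rightarrow> int) \<Rightarrow> (nat \<Rightarrow> int) \<Rightarrow> bool" where
  "is_diamond n a1 a2 \<longleftrightarrow>
     a2 0 = 1 \<and> a1 (n + 1) = 1 \<and>
     (\<forall>j\<in>{1..n}. a1 j * a2 j - a2 (j - 1) * a1 (j + 1) = 1)"

definition D3 :: "nat \<Rightarrow> (nat \<Rightarrow> int) \<Rightarrow> (nat \<Rightarrow> int) \<Rightarrow> bool" where
  "D3 n a1 a2 \<longleftrightarrow>
     (\<exists>a m :: int. 1 \<le> a \<and> a \<le> int ((n + 2) div 2) \<and>
        ((a1 1, a2 1) = (a, a + m) \<or> (a1 1, a2 1) = (a + m, a)) \<and>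
        a1 2 = a ^ 2 + a * m - 1 \<and>
        (a = 1 \<longrightarrow> 1 \<le> m \<and> m \<le> int n) \<and>
        (a > 1 \<longrightarrow> 0 \<le> m \<and> m \<le> int n + 2 * (1 - a)))"

definition pos_int_diamond :: "nat \<Rightarrow> (nat \<Rightarrow> int) \<Rightarrow> (nat \<Rightarrow> int) \<Rightarrow> bool" where
  "pos_int_diamond n a1 a2 \<longleftrightarrow> is_diamond n a1 a2 \<and> D3 n a1 a2"

definition diamond_vec :: "nat \<Rightarrow> (nat \<Rightarrow> int) \<Rightarrow> int list" where
  "diamond_vec n a1 = map a1 [1..<n + 1]"

definition vec_plus :: "int list \<Rightarrow> nat \<Rightarrow> int list" where
  "vec_plus v i = take i v @ [v ! (i - 1) + v ! i] @ take (length v - 1 - i) (drop i v)"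

section \<open>Dyck paths (True = U, False = D)\<close>

definition dyck :: "nat \<Rightarrow> bool list \<Rightarrow> bool" where
  "dyck N G \<longleftrightarrow> length G = 2 * N \<and> length (filter id G) = N \<and>
     (\<forall>k\<le>length G. length (filter Not (take k G)) \<le> length (filter id (take k G)))"

definition ups_before_D :: "bool list \<Rightarrow> nat \<Rightarrow> nat" where
  "ups_before_D G i = card {k. k < length G \<and> G ! k \<and> length (filter Not (take k G)) < i}"

definition dyck_vec :: "nat \<Rightarrow> bool list \<Rightarrow> int list" where
  "dyck_vec n G = map (\<lambda>j. int (ups_before_D G j) - int (j - 1)) [1..<n + 1]"

definition defines_dyck :: "nat \<Rightarrow> int list \<Rightarrow> bool" where
  "defines_dyck n w \<longleftrightarrow> (\<exists>G. dyck (n + 1) G \<and> w = dyck_vec n G)"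

section \<open>The operators T_i (partial: None if the process does not stop)\<close>

definition T_op :: "int list \<Rightarrow> nat \<Rightarrow> int option" where
  "T_op u i = map_option (\<lambda>(r, t). r + int t)
     (while_option (\<lambda>(r, t). \<exists>l\<in>{1..i}. r - u ! (l - 1) > 0)
        (\<lambda>(r, t). (r - u ! ((GREATEST l. l \<in> {1..i} \<and> r - u ! (l - 1) > 0) - 1), Suc t))
        (u ! (i - 1), 0::nat))"

definition T_vec :: "int list \<Rightarrow> int list option" where
  "T_vec u = (if \<forall>i\<in>{1..length u}. T_op u i \<noteq> None
              then Some (map (\<lambda>i. the (T_op u i)) [1..<length u + 1]) else None)"

end

theory Submission
  imports Defs
begin

text \<open>
  With m_j = w_j + j - 1 the number of U's before the j-th D, a vector w = (w_1, ..., w_n)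
  defines a Dyck path of semilength n + 1 iff j \<le> m_j, m is nondecreasing and m_n \<le> n + 1,
  i.e. iff its entries are positive, each is at most one more than the next, and w_n \<le> 2.

  Let t = T(v_A). If a_k were the first non-positive entry, the process for T_k would stop at
  once with T_k = a_k \<le> 0; so all a_k are positive and T_n = a_n = 1. Following the process
  for v_A+i gives T(v_A+i) = (t_1, ..., t_i, t_(i+1) + 1, t_(i+1), ..., t_(n-1)): T_j reads only
  the first j entries; the new entry a_i + a_(i+1) first loses a_i and then evolves like a_(i+1);
  and in the later processes the new entry is never the one subtracted, since whenever it is
  below r so is the entry a_(i+1) to its right. This vector satisfies the characterisation
  again, its last entry being t_(n-1) \<le> t_n + 1 = 2.
\<close>

section \<open>Dyck paths and their vectors\<close>

lemma card_less_Suc_split: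
  "card {k. k < Suc m \<and> P k} = (if P 0 then 1 else 0) + card {k. k < m \<and> P (Suc k)}"
proof -
  have "{k. k < Suc m \<and> P k} = (if P 0 then {0} else {}) \<union> Suc ` {k. k < m \<and> P (Suc k)}"
    by (auto simp: image_iff less_Suc_eq_0_disj)
  then show ?thesis by (simp add: card_image)
qed

lemma ups_before_D_0 [simp]: "ups_before_D G 0 = 0"
  by (simp add: ups_before_D_def)

lemma ups_before_D_Nil [simp]: "ups_before_D [] j = 0"
  by (simp add: ups_before_D_def)

lemma ups_before_D_Cons_True [simp]:
  "ups_before_D (True # G) j = (if j = 0 then 0 else Suc (ups_before_D G j))"
  unfolding ups_before_D_def by (simp only: length_Cons card_less_Suc_split) simp

lemma ups_before_D_Cons_False [simp]:
  "ups_before_D (False # G) j = (if j = 0 then 0 else ups_before_D G (j - 1))"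
  unfolding ups_before_D_def by (simp only: length_Cons card_less_Suc_split) (cases j, simp_all)

lemma ups_before_D_mono: "j \<le> j' \<Longrightarrow> ups_before_D G j \<le> ups_before_D G j'"
  unfolding ups_before_D_def by (rule card_mono) auto

lemma ups_before_D_le_ups: "ups_before_D G j \<le> length (filter id G)"
  unfolding ups_before_D_def length_filter_conv_card by (rule card_mono) auto

lemma ups_before_D_lower_bound:
  assumes "\<forall>k\<le>length G. length (filter Not (take k G)) \<le> length (filter id (take k G)) + c"
    and "j \<le> length (filter Not G)"
  shows "j \<le> ups_before_D G j + c"
  using assms
proof (induction G arbitrary: j c)
  case Nil
  then show ?case by simp
next
  case (Cons a G)
  have prefix: "length (filter Not (take k G)) + (if a then 0 else 1)
      \<le> length (filter id (take k G)) + (if a then 1 else 0) + c" if "k \<le> length G" for k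
    using Cons.prems(1)[rule_format, of "Suc k"] that by (cases a) auto
  show ?case
  proof (cases a)
    case True
    have "\<forall>k\<le>length G. length (filter Not (take k G)) \<le> length (filter id (take k G)) + (c + 1)"
      using prefix True by simp
    from Cons.IH[OF this] have "j \<le> ups_before_D G j + (c + 1)"
      using Cons.prems(2) True by simp
    then show ?thesis using True by simp
  next
    case False
    have "1 \<le> c"
      using Cons.prems(1)[rule_format, of 1] False by simp
    moreover have "\<forall>k\<le>length G. length (filter Not (take k G)) \<le> length (filter id (take k G)) + (c - 1)"
      using prefix False by fastforce
    from Cons.IH[OF this] have "j - 1 \<le> ups_before_D G (j - 1) + (c - 1)"
      using Cons.prems(2) False by simp
    ultimately show ?thesis using False by auto
  qed
qed

lemma dyck_ups_before_D_ge:
  assumes "dyck N G" "j \<le> N"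
  shows "j \<le> ups_before_D G j"
proof -
  have "length (filter Not G) = N"
    using assms(1) sum_length_filter_compl[of id G] by (simp add: dyck_def)
  then show ?thesis
    using ups_before_D_lower_bound[of G 0 j] assms by (simp add: dyck_def)
qed

fun dyck_of_runs :: "nat list \<Rightarrow> bool list" where
  "dyck_of_runs [] = []"
| "dyck_of_runs (g # gs) = replicate g True @ False # dyck_of_runs gs"

lemma length_dyck_of_runs [simp]: "length (dyck_of_runs gs) = sum_list gs + length gs"
  by (induction gs) auto

lemma ups_dyck_of_runs [simp]: "length (filter id (dyck_of_runs gs)) = sum_list gs"
  by (induction gs) auto

lemma ups_before_D_replicate_True:
  "ups_before_D (replicate g True @ G) j = (if j = 0 then 0 else g + ups_before_D G j)"
  by (induction g) auto

lemma ups_before_D_dyck_of_runs: "ups_before_D (dyck_of_runs gs) j = sum_list (take j gs)"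
  by (induction gs arbitrary: j) (auto simp: ups_before_D_replicate_True take_Cons' split: nat.splits)

lemma dyck_of_runs_prefix:
  assumes "\<forall>j\<le>length gs. j \<le> sum_list (take j gs) + c"
  shows "length (filter Not (take k (dyck_of_runs gs))) \<le> length (filter id (take k (dyck_of_runs gs))) + c"
  using assms
proof (induction gs arbitrary: k c)
  case Nil
  then show ?case by simp
next
  case (Cons g gs)
  have "1 \<le> g + c"
    using Cons.prems[rule_format, of 1] by simp
  have "\<forall>j\<le>length gs. j \<le> sum_list (take j gs) + (g + c - 1)"
  proof (intro allI impI)
    fix j assume "j \<le> length gs"
    then show "j \<le> sum_list (take j gs) + (g + c - 1)"
      using Cons.prems[rule_format, of "Suc j"] by simp
  qed
  note IH = Cons.IH[OF this]
  show ?case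
  proof (cases "k \<le> g")
    case True
    then show ?thesis by simp
  next
    case False
    then obtain k' where k: "k = g + Suc k'"
      using less_imp_Suc_add[of g k] by auto
    show ?thesis
      using IH[of k'] \<open>1 \<le> g + c\<close> by (simp add: k)
  qed
qed

lemma dyck_dyck_of_runs:
  assumes "length gs = N" "sum_list gs = N" "\<forall>j\<le>N. j \<le> sum_list (take j gs)"
  shows "dyck N (dyck_of_runs gs)"
  unfolding dyck_def using assms dyck_of_runs_prefix[of gs 0] by simp

lemma dyck_with_ups_before_D_exists:
  fixes m :: "nat \<Rightarrow> nat"
  assumes "m 0 = 0" "\<forall>j<N. m j \<le> m (Suc j)" "\<forall>j\<le>N. j \<le> m j" "m N = N"
  shows "\<exists>G. dyck N G \<and> (\<forall>j\<le>N. ups_before_D G j = m j)"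
proof -
  define gs where "gs = map (\<lambda>j. m (Suc j) - m j) [0..<N]"
  have telescope: "sum_list (take j gs) = m j" if "j \<le> N" for j
    using that
  proof (induction j)
    case 0
    then show ?case by (simp add: assms(1))
  next
    case (Suc j)
    then have "take (Suc j) gs = take j gs @ [m (Suc j) - m j]"
      by (simp add: gs_def take_Suc_conv_app_nth)
    then show ?case using Suc assms(2) by simp
  qed
  have "dyck N (dyck_of_runs gs)"
    using telescope[of N] telescope assms(3,4) by (intro dyck_dyck_of_runs) (auto simp: gs_def)
  moreover have "\<forall>j\<le>N. ups_before_D (dyck_of_runs gs) j = m j"
    by (simp add: ups_before_D_dyck_of_runs telescope)
  ultimately show ?thesis by blast
qed

lemma nth_dyck_vec: "k < n \<Longrightarrow> dyck_vec n G ! k = int (ups_before_D G (Suc k)) - int k"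
  by (simp add: dyck_vec_def del: upt_Suc)

lemma length_dyck_vec [simp]: "length (dyck_vec n G) = n"
  by (simp add: dyck_vec_def del: upt_Suc)

lemma defines_dyck_iff:
  "defines_dyck n w \<longleftrightarrow> length w = n \<and> (\<forall>k<n. 1 \<le> w ! k) \<and>
     (\<forall>k. Suc k < n \<longrightarrow> w ! k \<le> w ! Suc k + 1) \<and> (0 < n \<longrightarrow> w ! (n - 1) \<le> 2)"
proof (intro iffI conjI allI impI; (elim conjE)?)
  assume "defines_dyck n w"
  then obtain G where G: "dyck (n + 1) G" and w: "w = dyck_vec n G"
    by (auto simp: defines_dyck_def)
  show "length w = n" by (simp add: w)
  show "1 \<le> w ! k" if "k < n" for k
    using that dyck_ups_before_D_ge[OF G, of "Suc k"] by (simp add: w nth_dyck_vec)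
  show "w ! k \<le> w ! Suc k + 1" if "Suc k < n" for k
    using that ups_before_D_mono[of "Suc k" "Suc (Suc k)" G] by (simp add: w nth_dyck_vec)
  show "w ! (n - 1) \<le> 2" if "0 < n"
    using that ups_before_D_le_ups[of G n] G by (simp add: w nth_dyck_vec dyck_def)
next
  assume len: "length w = n" and pos: "\<forall>k<n. 1 \<le> w ! k"
    and drop: "\<forall>k. Suc k < n \<longrightarrow> w ! k \<le> w ! Suc k + 1" and last: "0 < n \<longrightarrow> w ! (n - 1) \<le> 2"
  define m where "m j = (if j = 0 then 0 else if j \<le> n then nat (w ! (j - 1) + int (j - 1)) else n + 1)" for j
  have "\<exists>G. dyck (n + 1) G \<and> (\<forall>j\<le>n + 1. ups_before_D G j = m j)"
  proof (rule dyck_with_ups_before_D_exists)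
    show "\<forall>j<n + 1. m j \<le> m (Suc j)"
    proof (intro allI impI)
      fix j assume "j < n + 1"
      then consider "j = 0" | "0 < j" "j < n" | "j = n" by linarith
      then show "m j \<le> m (Suc j)"
      proof cases
        case 2
        then show ?thesis using drop[rule_format, of "j - 1"] by (simp add: m_def nat_le_iff)
      next
        case 3
        then show ?thesis using last by (simp add: m_def nat_le_iff)
      qed (simp add: m_def)
    qed
    show "\<forall>j\<le>n + 1. j \<le> m j"
    proof (intro allI impI)
      fix j assume "j \<le> n + 1"
      then consider "j = 0" | "0 < j" "j \<le> n" | "j = n + 1" by linarith
      then show "j \<le> m j"
      proof cases
        case 2
        then have "1 \<le> w ! (j - 1)" using pos by simp
        then show ?thesis using 2 by (simp add: m_def le_nat_iff)
      qed (simp_all add: m_def)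
    qed
  qed (simp_all add: m_def)
  then obtain G where G: "dyck (n + 1) G" and ups: "\<forall>j\<le>n + 1. ups_before_D G j = m j"
    by blast
  have "w = dyck_vec n G"
    using len pos by (intro nth_equalityI) (auto simp: nth_dyck_vec ups m_def)
  then show "defines_dyck n w"
    using G by (auto simp: defines_dyck_def)
qed

definition insert_trunc :: "'a list \<Rightarrow> nat \<Rightarrow> 'a \<Rightarrow> 'a list" where
  "insert_trunc xs i c = butlast (take i xs @ c # drop i xs)"

lemma length_insert_trunc [simp]: "length (insert_trunc xs i c) = length xs"
  by (simp add: insert_trunc_def)

lemma nth_insert_trunc:
  "k < length xs \<Longrightarrow>
     insert_trunc xs i c ! k = (if k < i then xs ! k else if k = i then c else xs ! (k - 1))"
  by (auto simp: insert_trunc_def nth_butlast nth_append min_def nth_Cons' split: if_splits)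

lemma take_insert_trunc:
  "j \<le> length xs \<Longrightarrow> take j (insert_trunc xs i c) = take j (take i xs @ c # drop i xs)"
  by (simp add: insert_trunc_def take_butlast)

lemma defines_dyck_insert_trunc:
  assumes "defines_dyck n w" "w ! (n - 1) = 1" "i < n"
  shows "defines_dyck n (insert_trunc w i (w ! i + 1))"
proof -
  have len: "length w = n" and pos: "\<forall>k<n. 1 \<le> w ! k"
    and drop: "\<forall>k. Suc k < n \<longrightarrow> w ! k \<le> w ! Suc k + 1"
    using assms(1) by (simp_all add: defines_dyck_iff)
  let ?w = "insert_trunc w i (w ! i + 1)"
  have "1 \<le> ?w ! k" if "k < n" for k
    using that pos assms(3) len by (auto simp: nth_insert_trunc)
  moreover have "?w ! k \<le> ?w ! Suc k + 1" if "Suc k < n" for k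
  proof -
    consider "Suc k < i" | "Suc k = i" | "k = i" | "i < k" by linarith
    then show ?thesis
      using that drop[rule_format, of k] drop[rule_format, of "k - 1"] len
      by cases (auto simp: nth_insert_trunc)
  qed
  moreover have "?w ! (n - 1) \<le> 2"
    using drop[rule_format, of "n - 2"] assms(2,3) len
    by (auto simp: nth_insert_trunc numeral_2_eq_2 Suc_diff_Suc)
  ultimately show ?thesis
    using len by (simp add: defines_dyck_iff)
qed

section \<open>The operators T_i\<close>

text \<open>The process defining T_i, with f r the number subtracted from r (None once it stops).\<close>

definition descent :: "(int \<Rightarrow> int option) \<Rightarrow> int \<Rightarrow> int option" where
  "descent f r = map_option (\<lambda>(r, t). r + int t)
     (while_option (\<lambda>(r, t). f r \<noteq> None) (\<lambda>(r, t). (r - the (f r), Suc t)) (r, 0))"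

lemma descent_stop: "f r = None \<Longrightarrow> descent f r = Some r"
  by (simp add: descent_def while_option_unfold[of _ _ "(r, 0)"])

lemma descent_step:
  assumes "f r = Some d"
  shows "descent f r = map_option (\<lambda>z. z + 1) (descent f (r - d))"
proof -
  let ?b = "\<lambda>(r, t). f r \<noteq> None" and ?c = "\<lambda>(r, t). (r - the (f r), Suc t)"
  have "while_option ?b ?c (r, 0) = while_option ?b ?c (apsnd Suc (r - d, 0))"
    using assms by (simp add: while_option_unfold[of _ _ "(r, 0)"])
  also have "\<dots> = map_option (apsnd Suc) (while_option ?b ?c (r - d, 0))"
    by (rule while_option_commute_invariant[where P = "\<lambda>_. True", symmetric]) auto
  finally show ?thesis
    unfolding descent_def by (simp add: option.map_comp comp_def case_prod_beta ac_simps)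
qed

lemma descent_cong:
  assumes "\<And>r. r \<in> S \<Longrightarrow> f r = g r"
    and "\<And>r d. r \<in> S \<Longrightarrow> f r = Some d \<Longrightarrow> r - d \<in> S"
    and "r \<in> S"
  shows "descent f r = descent g r"
proof -
  have "map_option id (while_option (\<lambda>(r, t). f r \<noteq> None) (\<lambda>(r, t). (r - the (f r), Suc t)) (r, 0))
      = while_option (\<lambda>(r, t). g r \<noteq> None) (\<lambda>(r, t). (r - the (g r), Suc t)) (id (r, 0))"
    by (rule while_option_commute_invariant[where P = "\<lambda>(r, t). r \<in> S"]) (use assms in auto)
  then show ?thesis by (simp add: descent_def option.map_id)
qed

lemma last_filter_eq_nth:
  assumes "k < length xs" "P (xs ! k)" "\<And>k'. k < k' \<Longrightarrow> k' < length xs \<Longrightarrow> \<not> P (xs ! k')"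
  shows "last (filter P xs) = xs ! k"
proof -
  have "filter P (drop (Suc k) xs) = []"
    using assms(3) by (auto simp: filter_empty_conv in_set_conv_nth)
  then have "filter P xs = filter P (take k xs) @ [xs ! k]"
    using assms(2) by (subst id_take_nth_drop[OF assms(1)]) simp
  then show ?thesis by simp
qed

definition T_subtrahend :: "int list \<Rightarrow> nat \<Rightarrow> int \<Rightarrow> int option" where
  "T_subtrahend u i r =
     (let ys = filter (\<lambda>a. a < r) (take i u) in if ys = [] then None else Some (last ys))"

lemma T_subtrahend_SomeD:
  "T_subtrahend u i r = Some d \<Longrightarrow> d \<in> set (take i u) \<and> d < r"
  unfolding T_subtrahend_def Let_def
  by (auto split: if_splits dest!: last_in_set)

lemma T_op_eq_descent:
  assumes "i \<le> length u"
  shows "T_op u i = descent (T_subtrahend u i) (u ! (i - 1))"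
proof -
  have cond: "(\<exists>l\<in>{1..i}. r - u ! (l - 1) > 0) \<longleftrightarrow> T_subtrahend u i r \<noteq> None" for r
  proof -
    have "(\<exists>l\<in>{1..i}. r - u ! (l - 1) > 0) \<longleftrightarrow> (\<exists>k<i. u ! k < r)"
    proof
      assume "\<exists>l\<in>{1..i}. r - u ! (l - 1) > 0"
      then obtain l where "l \<in> {1..i}" "r - u ! (l - 1) > 0" by blast
      then show "\<exists>k<i. u ! k < r" by (intro exI[of _ "l - 1"]) auto
    next
      assume "\<exists>k<i. u ! k < r"
      then obtain k where "k < i" "u ! k < r" by blast
      then show "\<exists>l\<in>{1..i}. r - u ! (l - 1) > 0" by (intro bexI[of _ "Suc k"]) auto
    qed
    also have "\<dots> \<longleftrightarrow> (\<exists>a\<in>set (take i u). a < r)"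
      using assms by (fastforce simp: in_set_conv_nth)
    finally show ?thesis by (simp add: T_subtrahend_def Let_def filter_empty_conv)
  qed
  have step: "u ! ((GREATEST l. l \<in> {1..i} \<and> r - u ! (l - 1) > 0) - 1) = the (T_subtrahend u i r)"
    if "\<exists>l\<in>{1..i}. r - u ! (l - 1) > 0" for r
  proof -
    let ?P = "\<lambda>l. l \<in> {1..i} \<and> r - u ! (l - 1) > 0"
    define g where "g = (GREATEST l. ?P l)"
    have bound: "\<And>l. ?P l \<Longrightarrow> l \<le> i" by simp
    have g: "?P g"
      unfolding g_def using that GreatestI_nat[of ?P _ i] bound by blast
    have above_g: "\<not> ?P l" if "g < l" for l
      using Greatest_le_nat[of ?P l i] bound that unfolding g_def by fastforce
    have "last (filter (\<lambda>a. a < r) (take i u)) = take i u ! (g - 1)"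
    proof (rule last_filter_eq_nth)
      fix k assume "g - 1 < k" "k < length (take i u)"
      then show "\<not> take i u ! k < r"
        using above_g[of "Suc k"] g by auto
    qed (use g assms in auto)
    then show ?thesis
      using g that cond by (auto simp: T_subtrahend_def Let_def g_def)
  qed
  show ?thesis
    unfolding T_op_def descent_def cond
  proof (rule arg_cong[where f = "map_option _"], rule while_option_cong)
    fix s :: "int \<times> nat"
    obtain r t where s: "s = (r, t)" by fastforce
    assume "case s of (r, t) \<Rightarrow> T_subtrahend u i r \<noteq> None"
    then have "\<exists>l\<in>{1..i}. r - u ! (l - 1) > 0" using cond s by simp
    then show "(case s of (r, t) \<Rightarrow> (r - u ! ((GREATEST l. l \<in> {1..i} \<and> r - u ! (l - 1) > 0) - 1), Suc t))
      = (case s of (r, t) \<Rightarrow> (r - the (T_subtrahend u i r), Suc t))"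
      by (simp only: s case_prod_conv step)
  qed
qed

lemma T_op_stop:
  assumes "1 \<le> i" "i \<le> length u" "\<And>k. k < i \<Longrightarrow> u ! (i - 1) \<le> u ! k"
  shows "T_op u i = Some (u ! (i - 1))"
proof -
  have "T_subtrahend u i (u ! (i - 1)) = None"
    using assms by (fastforce simp: T_subtrahend_def filter_empty_conv in_set_conv_nth)
  then show ?thesis by (simp add: T_op_eq_descent[OF assms(2)] descent_stop)
qed

lemma vec_plus_eq_insert_trunc:
  "i < length u \<Longrightarrow> vec_plus u i = insert_trunc u i (u ! (i - 1) + u ! i)"
  by (simp add: vec_plus_def insert_trunc_def butlast_append butlast_conv_take take_Cons')

lemma T_op_insert_trunc_prefix:
  assumes "1 \<le> j" "j \<le> i" "j \<le> length u"
  shows "T_op (insert_trunc u i c) j = T_op u j"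
proof -
  have "take j (insert_trunc u i c) = take j u"
    using assms by (simp add: take_insert_trunc)
  then have "T_subtrahend (insert_trunc u i c) j = T_subtrahend u j"
    by (simp add: fun_eq_iff T_subtrahend_def)
  moreover have "insert_trunc u i c ! (j - 1) = u ! (j - 1)"
    using assms by (simp add: nth_insert_trunc)
  ultimately show ?thesis
    using assms by (simp add: T_op_eq_descent)
qed

lemma T_op_insert_trunc_shift:
  assumes "i + 2 \<le> j" "j \<le> length u" "u ! i \<le> c"
  shows "T_op (insert_trunc u i c) j = T_op u (j - 1)"
proof -
  obtain m where "j = i + 2 + m"
    using le_Suc_ex[OF assms(1)] by blast
  then have j: "j = Suc (Suc (i + m))" by simp
  define B where "B = take m (drop (Suc i) u)"
  have drop_u: "drop i u = u ! i # drop (Suc i) u"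
    using assms by (simp add: Cons_nth_drop_Suc)
  have take_v: "take j (insert_trunc u i c) = take i u @ c # u ! i # B"
    using assms unfolding j by (simp add: take_insert_trunc B_def drop_u)
  have take_u: "take (j - 1) u = take i u @ u ! i # B"
    using take_add[of i "Suc m" u] by (simp add: B_def j drop_u)
  have "T_subtrahend (insert_trunc u i c) j = T_subtrahend u (j - 1)"
    using assms(3) unfolding fun_eq_iff T_subtrahend_def take_v take_u by (auto simp: Let_def)
  moreover have "insert_trunc u i c ! (j - 1) = u ! (j - 1 - 1)"
    using assms by (auto simp: nth_insert_trunc)
  ultimately show ?thesis
    using assms by (simp add: T_op_eq_descent)
qed

lemma T_op_insert_trunc_at:
  assumes "1 \<le> i" "i < length u" and pos: "\<forall>a\<in>set u. 0 < a"
  shows "T_op (insert_trunc u i (u ! (i - 1) + u ! i)) (Suc i) = map_option (\<lambda>z. z + 1) (T_op u (Suc i))"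
proof -
  define c where "c = u ! (i - 1) + u ! i"
  define v where "v = insert_trunc u i c"
  have pos_prev: "0 < u ! (i - 1)" and pos_i: "0 < u ! i"
    using pos assms(2) by (simp_all add: less_imp_diff_less)
  have take_v: "take (Suc i) v = take (i - 1) u @ [u ! (i - 1), c]"
    using assms(1,2) take_Suc_conv_app_nth[of "i - 1" u]
    by (simp add: v_def take_insert_trunc Suc_le_eq)
  have take_u: "take (Suc i) u = take (i - 1) u @ [u ! (i - 1), u ! i]"
    using assms(1,2) take_Suc_conv_app_nth[of "i - 1" u] take_Suc_conv_app_nth[of i u] by simp
  have first_step: "T_subtrahend v (Suc i) c = Some (u ! (i - 1))"
    using pos_i by (simp add: T_subtrahend_def take_v c_def)
  have agree: "T_subtrahend v (Suc i) r = T_subtrahend u (Suc i) r" if "r \<le> u ! i" for r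
    using that pos_prev by (simp add: T_subtrahend_def take_v take_u c_def)
  have stays_below: "r - d \<le> u ! i" if "r \<le> u ! i" "T_subtrahend v (Suc i) r = Some d" for r d
  proof -
    have "d \<in> set u"
      using T_subtrahend_SomeD[of u "Suc i" r d] that agree set_take_subset by fastforce
    then show ?thesis using pos that(1) by fastforce
  qed
  have "T_op v (Suc i) = descent (T_subtrahend v (Suc i)) c"
    using assms(2) by (simp add: T_op_eq_descent v_def nth_insert_trunc)
  also have "\<dots> = map_option (\<lambda>z. z + 1) (descent (T_subtrahend v (Suc i)) (u ! i))"
    using descent_step[of "T_subtrahend v (Suc i)", OF first_step] by (simp add: c_def)
  also have "descent (T_subtrahend v (Suc i)) (u ! i) = descent (T_subtrahend u (Suc i)) (u ! i)"
    by (rule descent_cong[where S = "{..u ! i}"]) (auto simp: agree stays_below)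
  also have "\<dots> = T_op u (Suc i)"
    using assms(2) by (simp add: T_op_eq_descent)
  finally show ?thesis by (simp add: v_def c_def)
qed

lemma T_vec_eq_Some_iff:
  "T_vec u = Some w \<longleftrightarrow> length w = length u \<and> (\<forall>k<length u. T_op u (Suc k) = Some (w ! k))"
proof
  assume "T_vec u = Some w"
  then have "\<forall>j\<in>{1..length u}. T_op u j \<noteq> None" "w = map (\<lambda>j. the (T_op u j)) [1..<length u + 1]"
    by (auto simp: T_vec_def split: if_splits)
  then show "length w = length u \<and> (\<forall>k<length u. T_op u (Suc k) = Some (w ! k))"
    by (auto simp del: upt_Suc)
next
  assume w: "length w = length u \<and> (\<forall>k<length u. T_op u (Suc k) = Some (w ! k))"
  have "T_op u j \<noteq> None" if "j \<in> {1..length u}" for j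
    using w that by (cases j) auto
  moreover have "map (\<lambda>j. the (T_op u j)) [1..<length u + 1] = w"
    using w by (intro nth_equalityI) (auto simp del: upt_Suc)
  ultimately show "T_vec u = Some w" by (auto simp: T_vec_def)
qed

lemma T_op_pos_imp_pos:
  assumes "\<forall>k<length u. \<exists>z. T_op u (Suc k) = Some z \<and> 0 < z"
  shows "\<forall>a\<in>set u. 0 < a"
proof (rule ccontr)
  assume "\<not> (\<forall>a\<in>set u. 0 < a)"
  then have "\<exists>k. k < length u \<and> u ! k \<le> 0"
    by (auto simp: in_set_conv_nth not_less)
  then obtain k where k: "k < length u" "u ! k \<le> 0" and before: "\<forall>k'<k. \<not> (k' < length u \<and> u ! k' \<le> 0)"
    by (auto simp: exists_least_iff[of "\<lambda>k. k < length u \<and> u ! k \<le> 0"])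
  have "u ! k \<le> u ! k'" if "k' < Suc k" for k'
    using before[rule_format, of k'] k that by (cases "k' = k") auto
  then have "T_op u (Suc k) = Some (u ! k)"
    using T_op_stop[of "Suc k" u] k by simp
  then show False using assms k by auto
qed

lemma T_vec_vec_plus:
  assumes "1 \<le> i" "i < length u" and pos: "\<forall>a\<in>set u. 0 < a" and "T_vec u = Some w"
  shows "T_vec (vec_plus u i) = Some (insert_trunc w i (w ! i + 1))"
proof -
  have w: "length w = length u" "\<And>k. k < length u \<Longrightarrow> T_op u (Suc k) = Some (w ! k)"
    using assms(4) by (simp_all add: T_vec_eq_Some_iff)
  have "T_op (vec_plus u i) (Suc k) = Some (insert_trunc w i (w ! i + 1) ! k)" if "k < length u" for k
  proof -
    consider "k < i" | "k = i" | "i < k" by linarith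
    then show ?thesis
    proof cases
      case 1
      then show ?thesis
        using that assms(2) w by (simp add: vec_plus_eq_insert_trunc T_op_insert_trunc_prefix nth_insert_trunc)
    next
      case 2
      then show ?thesis
        using T_op_insert_trunc_at[OF assms(1-3)] assms(2) w
        by (simp add: vec_plus_eq_insert_trunc nth_insert_trunc)
    next
      case 3
      have "u ! i \<le> u ! (i - 1) + u ! i"
        using pos assms(2) by (simp add: less_imp_diff_less less_imp_le)
      then show ?thesis
        using 3 that assms(2) w(1) w(2)[of "k - 1"] by (simp add: vec_plus_eq_insert_trunc T_op_insert_trunc_shift nth_insert_trunc)
    qed
  qed
  then show ?thesis
    using w assms(2) by (simp add: T_vec_eq_Some_iff vec_plus_eq_insert_trunc)
qed

theorem proposition14:
  fixes n :: nat and a1 a2 :: "nat \<Rightarrow> int"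
  assumes "n \<ge> 2"
    and "pos_int_diamond n a1 a2"
    and "a1 n = 1"
    and "\<exists>w. T_vec (diamond_vec n a1) = Some w \<and> defines_dyck n w"
  shows "\<forall>i. 1 \<le> i \<and> i < n \<longrightarrow>
           (\<exists>w. T_vec (vec_plus (diamond_vec n a1) i) = Some w \<and> defines_dyck n w)"
proof (intro allI impI)
  fix i assume i: "1 \<le> i \<and> i < n"
  define u where "u = diamond_vec n a1"
  have len: "length u = n" and last_u: "u ! (n - 1) = 1"
    using assms(1,3) by (simp_all add: u_def diamond_vec_def del: upt_Suc)
  obtain w where Tu: "T_vec u = Some w" and "defines_dyck n w"
    using assms(4) by (auto simp: u_def)
  then have Tu_nth: "\<forall>k<n. T_op u (Suc k) = Some (w ! k)" and w_pos: "\<forall>k<n. 1 \<le> w ! k"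
    by (simp_all add: T_vec_eq_Some_iff defines_dyck_iff len)
  have pos: "\<forall>a\<in>set u. 0 < a"
    using Tu_nth w_pos len by (intro T_op_pos_imp_pos) auto
  have "u ! (n - 1) \<le> u ! k" if "k < n" for k
    using pos last_u len that by (simp add: int_one_le_iff_zero_less)
  then have "T_op u n = Some 1"
    using T_op_stop[of n u] last_u len assms(1) by simp
  then have "w ! (n - 1) = 1"
    using Tu_nth[rule_format, of "n - 1"] assms(1) by simp
  then show "\<exists>w. T_vec (vec_plus (diamond_vec n a1) i) = Some w \<and> defines_dyck n w"
    using T_vec_vec_plus[OF _ _ pos Tu] defines_dyck_insert_trunc[OF \<open>defines_dyck n w\<close>] i len
    by (auto simp: u_def)
qed

end
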